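(* For each $n<\omega$ let $G_n$ be a non-trivial finite group, and suppose there is a fixed group $\Gamma$ such that $G_n=\Gamma$ for infinitely many $n<\omega$. Then the compact group $G=\prod_{n<\omega}G_n$ (product topology, each factor discrete, normalized Haar measure) has a subgroup that is not Haar measurable. *)

theory Defs
  imports "HOL-Probability.Probability" "HOL-Algebra.Product_Groups"
begin

text \<open>Normalized Haar measure on the compact group \<open>\<Prod>n. G n\<close> (each factor discrete and
finite): the infinite product of the normalized counting (uniform) measures on the factors.
"Haar measurable" means measurable for the completion of this measure.\<close>

definition haar_prod :: "(nat \<Rightarrow> ('a, 'b) monoid_scheme) \<Rightarrow> (nat \<Rightarrow> 'a) measure" where
  "haar_prod G = (\<Pi>\<^sub>M n\<in>UNIV. uniform_count_measure (carrier (G n)))"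

definition haar_measurable :: "(nat \<Rightarrow> ('a, 'b) monoid_scheme) \<Rightarrow> (nat \<Rightarrow> 'a) set \<Rightarrow> bool" where
  "haar_measurable G S \<longleftrightarrow> S \<in> sets (completion (haar_prod G))"

end

theory Submission
  imports Defs
begin

text \<open>Fix a free ultrafilter \<open>U\<close> on \<open>\<nat>\<close> containing \<open>{n. G n = \<Gamma>}\<close>. The sequences that are
\<open>U\<close>-almost everywhere equal to \<open>\<one>\<close> form a subgroup \<open>H\<close>, whose left cosets are the finitely many
fibres \<open>{x. x n = \<delta> for U-most n}\<close>, \<open>\<delta> \<in> \<Gamma>\<close>; they partition the product. Given a finite set
\<open>J\<close> of coordinates, left translation by the element that is \<open>inv \<delta>\<close> on the \<open>\<Gamma>\<close>-coordinates
outside \<open>J\<close> and \<open>\<one>\<close> elsewhere preserves Haar measure, fixes every cylinder set over \<open>J\<close> and maps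
the fibre of \<open>\<delta>\<close> onto \<open>H\<close>. So if \<open>H\<close> were measurable, it would have the same measure as the
fibre of \<open>\<delta>\<close> on every cylinder set, hence coincide with it almost everywhere. All fibres would
then agree almost everywhere although they are disjoint and cover the whole space.\<close>

definition ultrafilter :: "'a filter \<Rightarrow> bool" where
  "ultrafilter U \<longleftrightarrow> U \<noteq> bot \<and> (\<forall>P. eventually P U \<or> eventually (\<lambda>x. \<not> P x) U)"

lemma ex_ultrafilter_le:
  fixes F :: "'a filter"
  assumes "F \<noteq> bot"
  shows "\<exists>U \<le> F. ultrafilter U"
proof -
  define A where "A = {U. U \<noteq> bot \<and> U \<le> F}"
  have "\<exists>M\<in>A. \<forall>U\<in>A. U \<le> M \<longrightarrow> U = M"
  proof (rule predicate_Zorn)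
    show "partial_order_on A (relation_of (\<lambda>U V. V \<le> U) A)"
      by (auto simp: partial_order_on_def preorder_on_def refl_on_def trans_def antisym_def relation_of_def)
  next
    fix C assume C: "C \<in> Chains (relation_of (\<lambda>U V. V \<le> U) A)"
    then have CA: "C \<subseteq> A" and total: "\<And>U V. U \<in> C \<Longrightarrow> V \<in> C \<Longrightarrow> U \<le> V \<or> V \<le> U"
      by (auto simp: Chains_def relation_of_def)
    show "\<exists>M\<in>A. \<forall>U\<in>C. M \<le> U"
    proof (cases "C = {}")
      case True
      then show ?thesis using assms by (auto simp: A_def)
    next
      case False
      have "\<exists>W\<in>C. W \<le> inf U V" if "U \<in> C" "V \<in> C" for U V
        using total[OF that] that by (metis inf.orderE inf_commute order_refl)
      then have "eventually P (Inf C) \<longleftrightarrow> (\<exists>U\<in>C. eventually P U)" for P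
        using False by (simp add: eventually_Inf_base)
      then have "Inf C \<noteq> bot"
        using CA by (auto simp: trivial_limit_def A_def)
      moreover have "Inf C \<le> F"
        using False CA by (auto simp: A_def intro: Inf_lower2)
      ultimately show ?thesis
        by (auto simp: A_def intro: Inf_lower)
    qed
  qed
  then obtain U where U: "U \<noteq> bot" "U \<le> F" and max: "\<And>V. V \<noteq> bot \<Longrightarrow> V \<le> U \<Longrightarrow> V = U"
    by (auto simp: A_def)
  have "eventually P U" if "\<not> eventually (\<lambda>x. \<not> P x) U" for P
  proof -
    have "inf U (principal {x. P x}) \<noteq> bot"
      using that by (simp add: trivial_limit_def eventually_inf_principal)
    then have "inf U (principal {x. P x}) = U"
      by (rule max) simp
    moreover have "eventually P (inf U (principal {x. P x}))"
      by (simp add: eventually_inf_principal)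
    ultimately show ?thesis
      by simp
  qed
  then show ?thesis
    using U by (auto simp: ultrafilter_def)
qed

lemma ex_free_ultrafilter:
  assumes "infinite A"
  shows "\<exists>U. ultrafilter U \<and> U \<le> cofinite \<and> eventually (\<lambda>x. x \<in> A) U"
proof -
  have "inf cofinite (principal A) \<noteq> bot"
    using assms by (simp add: trivial_limit_def eventually_inf_principal eventually_cofinite)
  then obtain U where "U \<le> inf cofinite (principal A)" "ultrafilter U"
    using ex_ultrafilter_le by blast
  then show ?thesis
    by (metis eventually_principal le_inf_iff filter_leD)
qed

lemma ultrafilter_eventually_eq_finite:
  assumes "ultrafilter U" "finite K" "eventually (\<lambda>x. f x \<in> K) U"
  shows "\<exists>k\<in>K. eventually (\<lambda>x. f x = k) U"
  using assms(2,3)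
proof (induction K rule: finite_induct)
  case empty
  then show ?case using assms(1) by (simp add: ultrafilter_def trivial_limit_def)
next
  case (insert k K)
  show ?case
  proof (cases "eventually (\<lambda>x. f x = k) U")
    case False
    then have "eventually (\<lambda>x. f x \<noteq> k) U"
      using assms(1) by (auto simp: ultrafilter_def)
    with insert.prems have "eventually (\<lambda>x. f x \<in> K) U"
      by eventually_elim auto
    then show ?thesis using insert.IH by blast
  qed blast
qed

lemma AE_eq_if_emeasure_Int_cylinders_eq:
  assumes "finite_measure (PiM I M)"
    and S: "S \<in> sets (PiM I M)" and R: "R \<in> sets (PiM I M)"
    and eq: "\<And>J E. finite J \<Longrightarrow> J \<subseteq> I \<Longrightarrow> (\<And>i. i \<in> J \<Longrightarrow> E i \<in> sets (M i)) \<Longrightarrow>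
      emeasure (PiM I M) (S \<inter> prod_emb I M J (PiE J E)) = emeasure (PiM I M) (R \<inter> prod_emb I M J (PiE J E))"
  shows "AE x in PiM I M. x \<in> S \<longleftrightarrow> x \<in> R"
proof -
  interpret finite_measure "PiM I M" by fact
  have "density (PiM I M) (indicator S) = density (PiM I M) (indicator R)"
  proof (rule measure_eqI_PiM_infinite)
    fix J E assume "finite J" "J \<subseteq> I" "\<And>i. i \<in> J \<Longrightarrow> E i \<in> sets (M i)"
    then show "emeasure (density (PiM I M) (indicator S)) (prod_emb I M J (PiE J E)) =
        emeasure (density (PiM I M) (indicator R)) (prod_emb I M J (PiE J E))"
      using S R eq by (simp add: emeasure_restricted sets_PiM_I)
  qed (simp_all add: finite_measure_restricted S)
  then have restricted_eq: "emeasure (PiM I M) (S \<inter> X) = emeasure (PiM I M) (R \<inter> X)"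
    if "X \<in> sets (PiM I M)" for X
    by (metis S R that emeasure_restricted)
  have null_diff: "A - B \<in> null_sets (PiM I M)"
    if "A \<in> sets (PiM I M)" "B \<in> sets (PiM I M)"
      and "emeasure (PiM I M) (A \<inter> A) = emeasure (PiM I M) (B \<inter> A)" for A B
  proof -
    have "A - B = A - B \<inter> A" by blast
    then show ?thesis
      using that by (auto simp: emeasure_Diff Int_commute null_sets_def)
  qed
  have "(S - R) \<union> (R - S) \<in> null_sets (PiM I M)"
    using null_diff[OF S R restricted_eq[OF S]] null_diff[OF R S restricted_eq[OF R, symmetric]]
    by blast
  then show ?thesis
    by (rule AE_I') blast
qed

lemma AE_eq_if_transported_fixing_finite_coordinates:
  assumes "finite_measure (PiM I M)"
    and A: "A \<in> sets (completion (PiM I M))"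
    and transport: "\<And>J. finite J \<Longrightarrow> J \<subseteq> I \<Longrightarrow> \<exists>T \<in> PiM I M \<rightarrow>\<^sub>M PiM I M.
      distr (PiM I M) (PiM I M) T = PiM I M \<and>
      (\<forall>x\<in>space (PiM I M). (\<forall>j\<in>J. T x j = x j) \<and> (T x \<in> A \<longleftrightarrow> x \<in> B))"
  shows "AE x in PiM I M. x \<in> A \<longleftrightarrow> x \<in> B"
proof -
  let ?\<Pi> = "PiM I M"
  obtain S N N' where "A = S \<union> N" "N \<subseteq> N'" "N' \<in> null_sets ?\<Pi>" and S: "S \<in> sets ?\<Pi>"
    using A by (rule sets_completionE)
  then have AE_S: "AE x in ?\<Pi>. x \<in> S \<longleftrightarrow> x \<in> A"
    by (intro AE_I'[of N']) auto
  have AE_transport: "AE x in ?\<Pi>. T x \<in> S \<longleftrightarrow> x \<in> B"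
    if T: "T \<in> ?\<Pi> \<rightarrow>\<^sub>M ?\<Pi>" "distr ?\<Pi> ?\<Pi> T = ?\<Pi>"
      and TB: "\<forall>x\<in>space ?\<Pi>. T x \<in> A \<longleftrightarrow> x \<in> B" for T
  proof -
    have "AE x in ?\<Pi>. T x \<in> S \<longleftrightarrow> T x \<in> A"
      using AE_distrD[OF T(1)] AE_S unfolding T(2) by blast
    then show ?thesis
      using TB by auto
  qed
  obtain T0 where T0: "T0 \<in> ?\<Pi> \<rightarrow>\<^sub>M ?\<Pi>" "distr ?\<Pi> ?\<Pi> T0 = ?\<Pi>"
    "\<forall>x\<in>space ?\<Pi>. T0 x \<in> A \<longleftrightarrow> x \<in> B"
    using transport[of "{}"] by auto
  define R where "R = T0 -` S \<inter> space ?\<Pi>"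
  have R: "R \<in> sets ?\<Pi>"
    unfolding R_def using T0(1) S by measurable
  have AE_R: "AE x in ?\<Pi>. x \<in> R \<longleftrightarrow> x \<in> B"
    using AE_transport[OF T0] by (auto simp: R_def)
  have "AE x in ?\<Pi>. x \<in> S \<longleftrightarrow> x \<in> R"
  proof (rule AE_eq_if_emeasure_Int_cylinders_eq[OF assms(1) S R])
    fix J E assume J: "finite J" "J \<subseteq> I" and E: "\<And>i. i \<in> J \<Longrightarrow> E i \<in> sets (M i)"
    define C where "C = prod_emb I M J (PiE J E)"
    have C: "C \<in> sets ?\<Pi>"
      unfolding C_def using J E by (simp add: sets_PiM_I)
    obtain T where T: "T \<in> ?\<Pi> \<rightarrow>\<^sub>M ?\<Pi>" "distr ?\<Pi> ?\<Pi> T = ?\<Pi>"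
      and fix_J: "\<forall>x\<in>space ?\<Pi>. \<forall>j\<in>J. T x j = x j"
      and TB: "\<forall>x\<in>space ?\<Pi>. T x \<in> A \<longleftrightarrow> x \<in> B"
      using transport[OF J] by blast
    txt \<open>\<open>T\<close> fixes \<open>C\<close> and carries \<open>S\<close> to \<open>R\<close> up to a null set.\<close>
    have T_C: "T x \<in> C \<longleftrightarrow> x \<in> C" if "x \<in> space ?\<Pi>" for x
    proof -
      have "restrict (T x) J = restrict x J"
        using fix_J that by auto
      moreover have "T x \<in> space ?\<Pi>"
        using T(1) that by (rule measurable_space)
      ultimately show ?thesis
        using that by (simp add: C_def prod_emb_def space_PiM)
    qed
    have "emeasure ?\<Pi> (S \<inter> C) = emeasure ?\<Pi> (T -` (S \<inter> C) \<inter> space ?\<Pi>)"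
      using T S C by (metis emeasure_distr sets.Int)
    also have "\<dots> = emeasure ?\<Pi> (R \<inter> C)"
    proof (rule emeasure_eq_AE)
      show "AE x in ?\<Pi>. x \<in> T -` (S \<inter> C) \<inter> space ?\<Pi> \<longleftrightarrow> x \<in> R \<inter> C"
        using AE_transport[OF T TB] AE_R AE_space by eventually_elim (auto simp: T_C)
    qed (use T S C R in \<open>auto intro: measurable_sets\<close>)
    finally show "emeasure ?\<Pi> (S \<inter> C) = emeasure ?\<Pi> (R \<inter> C)" .
  qed
  with AE_S AE_R show ?thesis
    by eventually_elim blast
qed

lemma (in prob_space) finite_cover_AE_eq_not_disjoint:
  assumes "finite K" and cover: "\<And>x. x \<in> space M \<Longrightarrow> \<exists>k\<in>K. x \<in> B k"
    and AE_eq: "\<And>k. k \<in> K \<Longrightarrow> AE x in M. x \<in> B k \<longleftrightarrow> x \<in> A"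
    and "k1 \<in> K" "k2 \<in> K"
  shows "B k1 \<inter> B k2 \<noteq> {}"
proof
  assume "B k1 \<inter> B k2 = {}"
  have "AE x in M. \<forall>k\<in>K. x \<in> B k \<longleftrightarrow> x \<in> A"
    using \<open>finite K\<close> AE_eq by (rule AE_finite_allI)
  with AE_space have "AE x in M. False"
  proof eventually_elim
    case (elim x)
    then show False
      using cover[of x] assms(4,5) \<open>B k1 \<inter> B k2 = {}\<close> by blast
  qed
  then show False
    by simp
qed

lemma distr_PiM_coordinatewise:
  assumes "\<And>i. i \<in> I \<Longrightarrow> prob_space (M i)"
    and f: "\<And>i. i \<in> I \<Longrightarrow> f i \<in> M i \<rightarrow>\<^sub>M M i"
    and preserving: "\<And>i. i \<in> I \<Longrightarrow> distr (M i) (M i) (f i) = M i"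
  shows "distr (PiM I M) (PiM I M) (\<lambda>x. \<lambda>i\<in>I. f i (x i)) = PiM I M"
proof -
  let ?f = "\<lambda>x. \<lambda>i\<in>I. f i (x i)"
  have F: "?f \<in> PiM I M \<rightarrow>\<^sub>M PiM I M"
    using f by (intro measurable_restrict) (auto intro: measurable_compose[OF measurable_component_singleton])
  have "finite_measure (distr (PiM I M) (PiM I M) ?f)"
    using F assms(1) by (intro prob_space.finite_measure prob_space.prob_space_distr prob_space_PiM)
  then show ?thesis
  proof (rule measure_eqI_PiM_infinite[rotated 3])
    fix J E assume J: "finite J" "J \<subseteq> I" and E: "\<And>i. i \<in> J \<Longrightarrow> E i \<in> sets (M i)"
    have "?f -` prod_emb I M J (PiE J E) \<inter> space (PiM I M) =
        prod_emb I M J (\<Pi>\<^sub>E j\<in>J. f j -` E j \<inter> space (M j))"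
      using J measurable_space[OF f] subsetD[OF J(2)]
      by (auto simp: prod_emb_def space_PiM PiE_iff Int_absorb1)
    moreover have "emeasure (M j) (f j -` E j \<inter> space (M j)) = emeasure (M j) (E j)" if "j \<in> J" for j
      using J E f preserving that by (metis emeasure_distr subsetD)
    ultimately show "emeasure (distr (PiM I M) (PiM I M) ?f) (prod_emb I M J (PiE J E)) =
        emeasure (PiM I M) (prod_emb I M J (PiE J E))"
      using assms J E F by (simp add: emeasure_distr sets_PiM_I emeasure_PiM_emb measurable_sets subset_eq)
  qed simp_all
qed

lemma (in group) measurable_cmult_uniform_count_measure:
  "c \<in> carrier G \<Longrightarrow>
    (\<lambda>x. c \<otimes> x) \<in> uniform_count_measure (carrier G) \<rightarrow>\<^sub>M uniform_count_measure (carrier G)"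
  unfolding measurable_cong_sets[OF sets_uniform_count_measure_count_space sets_uniform_count_measure_count_space]
  by (simp add: Pi_iff)

lemma (in group) distr_uniform_count_measure_cmult:
  assumes "finite (carrier G)" and c: "c \<in> carrier G"
  shows "distr (uniform_count_measure (carrier G)) (uniform_count_measure (carrier G)) (\<lambda>x. c \<otimes> x)
    = uniform_count_measure (carrier G)"
proof (rule measure_eqI)
  fix X assume "X \<in> sets (distr (uniform_count_measure (carrier G)) (uniform_count_measure (carrier G)) (\<lambda>x. c \<otimes> x))"
  then have X: "X \<subseteq> carrier G"
    by (simp add: sets_uniform_count_measure)
  define X' where "X' = (\<lambda>x. c \<otimes> x) -` X \<inter> carrier G"
  have "(\<lambda>x. c \<otimes> x) ` X' = X \<inter> (\<lambda>x. c \<otimes> x) ` carrier G"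
    unfolding X'_def by auto
  then have "(\<lambda>x. c \<otimes> x) ` X' = X"
    using X c by (simp add: surj_const_mult Int_absorb2)
  moreover have "inj_on (\<lambda>x. c \<otimes> x) X'"
    using inj_on_cmult[OF c] by (rule inj_on_subset) (simp add: X'_def)
  ultimately have "card X' = card X"
    using card_image by fastforce
  then show "emeasure (distr (uniform_count_measure (carrier G)) (uniform_count_measure (carrier G)) (\<lambda>x. c \<otimes> x)) X
      = emeasure (uniform_count_measure (carrier G)) X"
    using assms X measurable_cmult_uniform_count_measure[OF c]
    by (simp add: emeasure_distr sets_uniform_count_measure emeasure_uniform_count_measure X'_def
        space_uniform_count_measure)
qed simp

lemma (in group) prob_space_uniform_count_measure_carrier:
  "finite (carrier G) \<Longrightarrow> prob_space (uniform_count_measure (carrier G))"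
  using prob_space_uniform_count_measure by blast

lemma prob_space_haar_prod:
  assumes "\<And>n. group (G n)" "\<And>n. finite (carrier (G n))"
  shows "prob_space (haar_prod G)"
  unfolding haar_prod_def
  by (rule prob_space_PiM) (rule group.prob_space_uniform_count_measure_carrier[OF assms])

lemma
  assumes "\<And>n. group (G n)" "\<And>n. finite (carrier (G n))"
    and c: "c \<in> carrier (product_group UNIV G)"
  shows measurable_haar_prod_mult: "(\<lambda>x. c \<otimes>\<^bsub>product_group UNIV G\<^esub> x) \<in> haar_prod G \<rightarrow>\<^sub>M haar_prod G"
    and distr_haar_prod_mult: "distr (haar_prod G) (haar_prod G) (\<lambda>x. c \<otimes>\<^bsub>product_group UNIV G\<^esub> x) = haar_prod G"
proof -
  have c_n: "c n \<in> carrier (G n)" for n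
    using c by auto
  have mult: "(\<lambda>x. c \<otimes>\<^bsub>product_group UNIV G\<^esub> x) = (\<lambda>x. \<lambda>n\<in>UNIV. c n \<otimes>\<^bsub>G n\<^esub> x n)"
    by simp
  show "(\<lambda>x. c \<otimes>\<^bsub>product_group UNIV G\<^esub> x) \<in> haar_prod G \<rightarrow>\<^sub>M haar_prod G"
    unfolding mult haar_prod_def
    using group.measurable_cmult_uniform_count_measure[OF assms(1) c_n]
    by (intro measurable_restrict) (auto intro: measurable_compose[OF measurable_component_singleton])
  show "distr (haar_prod G) (haar_prod G) (\<lambda>x. c \<otimes>\<^bsub>product_group UNIV G\<^esub> x) = haar_prod G"
    unfolding mult haar_prod_def
    using group.prob_space_uniform_count_measure_carrier[OF assms(1,2)]
      group.measurable_cmult_uniform_count_measure[OF assms(1) c_n]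
      group.distr_uniform_count_measure_cmult[OF assms(1,2) c_n]
    by (intro distr_PiM_coordinatewise[where f="\<lambda>n a. c n \<otimes>\<^bsub>G n\<^esub> a"])
qed

locale ultrafilter_group_family =
  fixes G :: "nat \<Rightarrow> ('a, 'b) monoid_scheme" and \<Gamma> :: "('a, 'b) monoid_scheme" and U :: "nat filter"
  assumes groups: "\<And>n. group (G n)"
    and finite_carriers: "\<And>n. finite (carrier (G n))"
    and ultrafilter: "ultrafilter U"
    and free: "U \<le> cofinite"
    and eventually_\<Gamma>: "eventually (\<lambda>n. G n = \<Gamma>) U"
begin

abbreviation PG :: "(nat \<Rightarrow> 'a) monoid" where
  "PG \<equiv> product_group UNIV G"

definition fibre :: "'a \<Rightarrow> (nat \<Rightarrow> 'a) set" where
  "fibre \<delta> = {x \<in> carrier PG. eventually (\<lambda>n. x n = \<delta>) U}"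

definition tail_element :: "'a \<Rightarrow> nat set \<Rightarrow> nat \<Rightarrow> 'a" where
  "tail_element \<gamma> J n = (if G n = \<Gamma> \<and> n \<notin> J then \<gamma> else \<one>\<^bsub>G n\<^esub>)"

lemma group_PG: "group PG"
  using groups by simp

lemma ex_index_\<Gamma>: "\<exists>n. G n = \<Gamma>"
  using eventually_happens[OF eventually_\<Gamma>] ultrafilter by (auto simp: ultrafilter_def)

lemma group_\<Gamma>: "group \<Gamma>"
  by (metis ex_index_\<Gamma> groups)

lemma finite_carrier_\<Gamma>: "finite (carrier \<Gamma>)"
  by (metis ex_index_\<Gamma> finite_carriers)

lemma eventually_carrier_\<Gamma>:
  "x \<in> carrier PG \<Longrightarrow> eventually (\<lambda>n. x n \<in> carrier \<Gamma>) U"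
  using eventually_\<Gamma> by eventually_elim auto

lemma eventually_notin_finite: "finite J \<Longrightarrow> eventually (\<lambda>n. n \<notin> J) U"
  using free by (rule filter_leD) (simp add: eventually_cofinite)

lemma fibres_cover: "x \<in> carrier PG \<Longrightarrow> \<exists>\<delta>\<in>carrier \<Gamma>. x \<in> fibre \<delta>"
  using ultrafilter_eventually_eq_finite[OF ultrafilter finite_carrier_\<Gamma> eventually_carrier_\<Gamma>]
  by (auto simp: fibre_def)

lemma fibres_disjoint:
  assumes "\<delta> \<noteq> \<delta>'"
  shows "fibre \<delta> \<inter> fibre \<delta>' = {}"
proof -
  have "eventually (\<lambda>n. False) U"
    if "eventually (\<lambda>n. x n = \<delta>) U" "eventually (\<lambda>n. x n = \<delta>') U" for x :: "nat \<Rightarrow> 'a"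
    using that by eventually_elim (use assms in auto)
  then show ?thesis
    using ultrafilter by (auto simp: fibre_def ultrafilter_def trivial_limit_def)
qed

lemma fibre_one_subgroup: "subgroup (fibre \<one>\<^bsub>\<Gamma>\<^esub>) PG"
proof (rule group.subgroupI[OF group_PG])
  show "fibre \<one>\<^bsub>\<Gamma>\<^esub> \<noteq> {}"
  proof -
    have "eventually (\<lambda>n. \<one>\<^bsub>PG\<^esub> n = \<one>\<^bsub>\<Gamma>\<^esub>) U"
      using eventually_\<Gamma> by eventually_elim auto
    then have "\<one>\<^bsub>PG\<^esub> \<in> fibre \<one>\<^bsub>\<Gamma>\<^esub>"
      using groups by (simp add: fibre_def group.is_monoid)
    then show ?thesis by blast
  qed
next
  fix x assume "x \<in> fibre \<one>\<^bsub>\<Gamma>\<^esub>"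
  then have x: "x \<in> carrier PG" and x_one: "eventually (\<lambda>n. x n = \<one>\<^bsub>\<Gamma>\<^esub>) U"
    by (auto simp: fibre_def)
  have "eventually (\<lambda>n. (inv\<^bsub>PG\<^esub> x) n = \<one>\<^bsub>\<Gamma>\<^esub>) U"
    using x_one eventually_\<Gamma> by eventually_elim (use x groups in \<open>auto simp: group.is_monoid monoid.inv_one\<close>)
  then show "inv\<^bsub>PG\<^esub> x \<in> fibre \<one>\<^bsub>\<Gamma>\<^esub>"
    using group.inv_closed[OF group_PG x] by (simp add: fibre_def del: inv_product_group)
next
  fix x y assume "x \<in> fibre \<one>\<^bsub>\<Gamma>\<^esub>" "y \<in> fibre \<one>\<^bsub>\<Gamma>\<^esub>"
  then have xy: "x \<in> carrier PG" "y \<in> carrier PG"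
    and xy_one: "eventually (\<lambda>n. x n = \<one>\<^bsub>\<Gamma>\<^esub>) U" "eventually (\<lambda>n. y n = \<one>\<^bsub>\<Gamma>\<^esub>) U"
    by (auto simp: fibre_def)
  have "eventually (\<lambda>n. (x \<otimes>\<^bsub>PG\<^esub> y) n = \<one>\<^bsub>\<Gamma>\<^esub>) U"
    using xy_one eventually_\<Gamma> by eventually_elim (use groups in \<open>auto simp: group.is_monoid\<close>)
  then show "x \<otimes>\<^bsub>PG\<^esub> y \<in> fibre \<one>\<^bsub>\<Gamma>\<^esub>"
    using monoid.m_closed[OF group.is_monoid[OF group_PG] xy] by (simp add: fibre_def del: mult_product_group)
qed (auto simp: fibre_def)

lemma tail_element_closed: "\<gamma> \<in> carrier \<Gamma> \<Longrightarrow> tail_element \<gamma> J \<in> carrier PG"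
  using groups by (auto simp: tail_element_def group.is_monoid)

lemma tail_element_mult_fibre_iff:
  assumes x: "x \<in> carrier PG" and \<gamma>: "\<gamma> \<in> carrier \<Gamma>" and \<delta>: "\<delta> \<in> carrier \<Gamma>" and "finite J"
  shows "tail_element \<gamma> J \<otimes>\<^bsub>PG\<^esub> x \<in> fibre \<delta> \<longleftrightarrow> x \<in> fibre (inv\<^bsub>\<Gamma>\<^esub> \<gamma> \<otimes>\<^bsub>\<Gamma>\<^esub> \<delta>)"
proof -
  have "eventually (\<lambda>n. (tail_element \<gamma> J \<otimes>\<^bsub>PG\<^esub> x) n = \<delta> \<longleftrightarrow> x n = inv\<^bsub>\<Gamma>\<^esub> \<gamma> \<otimes>\<^bsub>\<Gamma>\<^esub> \<delta>) U"
    using eventually_\<Gamma> eventually_notin_finite[OF \<open>finite J\<close>] eventually_carrier_\<Gamma>[OF x]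
    by eventually_elim (use \<gamma> \<delta> group_\<Gamma> in \<open>auto simp: tail_element_def group.inv_solve_left\<close>)
  moreover have "tail_element \<gamma> J \<otimes>\<^bsub>PG\<^esub> x \<in> carrier PG"
    using x tail_element_closed[OF \<gamma>] by (rule monoid.m_closed[OF group.is_monoid[OF group_PG], rotated 1])
  ultimately show ?thesis
    using x by (simp add: fibre_def eventually_subst)
qed

lemma space_haar_prod: "space (haar_prod G) = carrier PG"
  by (simp add: haar_prod_def space_PiM space_uniform_count_measure)

lemma AE_fibre_one_eq_fibre:
  assumes measurable: "haar_measurable G (fibre \<one>\<^bsub>\<Gamma>\<^esub>)" and \<delta>: "\<delta> \<in> carrier \<Gamma>"
  shows "AE x in haar_prod G. x \<in> fibre \<one>\<^bsub>\<Gamma>\<^esub> \<longleftrightarrow> x \<in> fibre \<delta>"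
proof -
  have transport: "\<exists>T \<in> haar_prod G \<rightarrow>\<^sub>M haar_prod G. distr (haar_prod G) (haar_prod G) T = haar_prod G \<and>
      (\<forall>x\<in>space (haar_prod G). (\<forall>j\<in>J. T x j = x j) \<and> (T x \<in> fibre \<one>\<^bsub>\<Gamma>\<^esub> \<longleftrightarrow> x \<in> fibre \<delta>))"
    if "finite J" for J
  proof -
    define t where "t = tail_element (inv\<^bsub>\<Gamma>\<^esub> \<delta>) J"
    have t: "t \<in> carrier PG"
      unfolding t_def by (rule tail_element_closed[OF group.inv_closed[OF group_\<Gamma> \<delta>]])
    have "(t \<otimes>\<^bsub>PG\<^esub> x) j = x j" if "j \<in> J" "x \<in> carrier PG" for x j
      using that groups by (auto simp: t_def tail_element_def group.is_monoid PiE_iff)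
    moreover have "t \<otimes>\<^bsub>PG\<^esub> x \<in> fibre \<one>\<^bsub>\<Gamma>\<^esub> \<longleftrightarrow> x \<in> fibre \<delta>" if "x \<in> carrier PG" for x
      using tail_element_mult_fibre_iff[OF that _ _ \<open>finite J\<close>] \<delta> group_\<Gamma>
      by (simp add: t_def group.is_monoid)
    ultimately show ?thesis
      using measurable_haar_prod_mult[OF groups finite_carriers t]
        distr_haar_prod_mult[OF groups finite_carriers t] space_haar_prod
      by (intro bexI[of _ "\<lambda>x. t \<otimes>\<^bsub>PG\<^esub> x"]) auto
  qed
  have "finite_measure (haar_prod G)"
    using prob_space_haar_prod[OF groups finite_carriers] by (rule prob_space.finite_measure)
  then show ?thesis
    using AE_eq_if_transported_fixing_finite_coordinates[of UNIV "\<lambda>n. uniform_count_measure (carrier (G n))",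
        folded haar_prod_def] measurable transport
    by (simp add: haar_measurable_def)
qed

lemma fibre_one_not_haar_measurable:
  assumes "carrier \<Gamma> \<noteq> {\<one>\<^bsub>\<Gamma>\<^esub>}"
  shows "\<not> haar_measurable G (fibre \<one>\<^bsub>\<Gamma>\<^esub>)"
proof
  assume measurable: "haar_measurable G (fibre \<one>\<^bsub>\<Gamma>\<^esub>)"
  have one: "\<one>\<^bsub>\<Gamma>\<^esub> \<in> carrier \<Gamma>"
    using group_\<Gamma> by (simp add: group.is_monoid)
  then obtain \<delta> where \<delta>: "\<delta> \<in> carrier \<Gamma>" "\<delta> \<noteq> \<one>\<^bsub>\<Gamma>\<^esub>"
    using assms by blast
  interpret prob_space "haar_prod G"
    by (rule prob_space_haar_prod[OF groups finite_carriers])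
  have "fibre \<delta> \<inter> fibre \<one>\<^bsub>\<Gamma>\<^esub> \<noteq> {}"
  proof (rule finite_cover_AE_eq_not_disjoint[where B = fibre and A = "fibre \<one>\<^bsub>\<Gamma>\<^esub>"])
    show "\<exists>\<delta>\<in>carrier \<Gamma>. x \<in> fibre \<delta>" if "x \<in> space (haar_prod G)" for x
      using that fibres_cover by (simp add: space_haar_prod)
    show "AE x in haar_prod G. x \<in> fibre \<delta> \<longleftrightarrow> x \<in> fibre \<one>\<^bsub>\<Gamma>\<^esub>" if "\<delta> \<in> carrier \<Gamma>" for \<delta>
      using AE_fibre_one_eq_fibre[OF measurable that] by auto
  qed (use finite_carrier_\<Gamma> \<delta>(1) one in auto)
  then show False
    using fibres_disjoint[OF \<delta>(2)] by blast
qed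

end

theorem mainTheorem6:
  fixes G :: "nat \<Rightarrow> ('a, 'b) monoid_scheme" and \<Gamma> :: "('a, 'b) monoid_scheme"
  assumes "\<And>n. group (G n)"
    and "\<And>n. finite (carrier (G n))"
    and "\<And>n. carrier (G n) \<noteq> {\<one>\<^bsub>G n\<^esub>}"
    and "infinite {n. G n = \<Gamma>}"
  shows "\<exists>H. subgroup H (product_group UNIV G) \<and> \<not> haar_measurable G H"
proof -
  obtain U where U: "ultrafilter U" "U \<le> cofinite" "eventually (\<lambda>n. G n = \<Gamma>) U"
    using ex_free_ultrafilter[OF assms(4)] by auto
  interpret ultrafilter_group_family G \<Gamma> U
    using assms(1,2) U by (simp add: ultrafilter_group_family_def)
  have "carrier \<Gamma> \<noteq> {\<one>\<^bsub>\<Gamma>\<^esub>}"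
    using ex_index_\<Gamma> assms(3) by metis
  then show ?thesis
    using fibre_one_subgroup fibre_one_not_haar_measurable by blast
qed

end
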